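(* Let $\Re$ be a commutative Krasner hyperring with identity $1\ne0$, $\phi:L(\Re)\to L(\Re)\cup\{\emptyset\}$ a function, and $T$ a proper $\phi$-primary hyperideal of $\Re$. (i) If $M$ is a hyperideal of $\Re$ with $M\subseteq T$, then $T/M$ is a $\phi_M$-primary hyperideal of $\Re/M$. (ii) If $S$ is a multiplicatively closed subset of $\Re$ with $T\cap S=\emptyset$ and $\phi(T)_S\subseteq\phi_S(T_S)$, then $T_S$ is a $\phi_S$-primary hyperideal of $\Re_S$.
   Context: Krasner hyperring: $(\Re,\oplus)$ canonical hypergroup, $(\Re,\circ)$ commutative semigroup with identity $1\ne0$, $0$ absorbing, distributive. For a hyperideal $M$, $\Re/M=\{a\oplus M\}$ is the quotient hyperring, $N/M=\{a\oplus M: a\in N\}$ for $N\supseteq M$, and $\phi_M(N/M)=(\phi(N)\oplus M)/M$ (or $\emptyset$ if $\phi(N)=\emptyset$). For multiplicatively closed $S$, $\Re_S$ is the localization, $N_S=\{a/s:a\in N,s\in S\}$, and for $J\in L(\Re_S)$, $\phi_S(J)=(\phi(J\cap\Re))_S$ where $J\cap\Re=\{a: a/1\in J\}$ ($\emptyset$ if $\phi(J\cap\Re)=\emptyset$). $N$ is $\psi$-primary if $a\circ b\in N$, $a\circ b\notin\psi(N)$ imply $a\in N$ or $b^k\in N$ for some $k\in\mathbb{N}$. *)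

theory Defs
  imports Main
begin

record 'a hyperring =
  carrier :: "'a set"
  hadd :: "'a \<Rightarrow> 'a \<Rightarrow> 'a set"
  hmul :: "'a \<Rightarrow> 'a \<Rightarrow> 'a"
  hzero :: 'a
  hone :: 'a

definition hneg :: "'a hyperring \<Rightarrow> 'a \<Rightarrow> 'a" where
  "hneg R x = (THE y. y \<in> carrier R \<and> hzero R \<in> hadd R x y)"

definition krasner_hyperring :: "'a hyperring \<Rightarrow> bool" where
  "krasner_hyperring R \<longleftrightarrow>
     hzero R \<in> carrier R \<and> hone R \<in> carrier R \<and> hone R \<noteq> hzero R \<and>
     \<comment> \<open>(R, hadd) canonical hypergroup\<close>
     (\<forall>x\<in>carrier R. \<forall>y\<in>carrier R. hadd R x y \<subseteq> carrier R \<and> hadd R x y \<noteq> {}) \<and>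
     (\<forall>x\<in>carrier R. \<forall>y\<in>carrier R. \<forall>z\<in>carrier R.
        (\<Union>w\<in>hadd R x y. hadd R w z) = (\<Union>w\<in>hadd R y z. hadd R x w)) \<and>
     (\<forall>x\<in>carrier R. \<forall>y\<in>carrier R. hadd R x y = hadd R y x) \<and>
     (\<forall>x\<in>carrier R. hadd R (hzero R) x = {x}) \<and>
     (\<forall>x\<in>carrier R. \<exists>!y. y \<in> carrier R \<and> hzero R \<in> hadd R x y) \<and>
     (\<forall>x\<in>carrier R. \<forall>y\<in>carrier R. \<forall>z\<in>carrier R.
        z \<in> hadd R x y \<longrightarrow> y \<in> hadd R z (hneg R x) \<and> x \<in> hadd R z (hneg R y)) \<and>
     \<comment> \<open>(R, hmul) commutative semigroup with identity, zero absorbing\<close>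
     (\<forall>x\<in>carrier R. \<forall>y\<in>carrier R. hmul R x y \<in> carrier R) \<and>
     (\<forall>x\<in>carrier R. \<forall>y\<in>carrier R. \<forall>z\<in>carrier R.
        hmul R (hmul R x y) z = hmul R x (hmul R y z)) \<and>
     (\<forall>x\<in>carrier R. \<forall>y\<in>carrier R. hmul R x y = hmul R y x) \<and>
     (\<forall>x\<in>carrier R. hmul R (hone R) x = x) \<and>
     (\<forall>x\<in>carrier R. hmul R (hzero R) x = hzero R) \<and>
     \<comment> \<open>distributivity\<close>
     (\<forall>x\<in>carrier R. \<forall>y\<in>carrier R. \<forall>z\<in>carrier R.
        hmul R x ` hadd R y z = hadd R (hmul R x y) (hmul R x z))"

definition hyperideal :: "'a hyperring \<Rightarrow> 'a set \<Rightarrow> bool" where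
  "hyperideal R N \<longleftrightarrow> N \<subseteq> carrier R \<and> N \<noteq> {} \<and>
     (\<forall>a\<in>N. \<forall>b\<in>N. hadd R a (hneg R b) \<subseteq> N) \<and>
     (\<forall>r\<in>carrier R. \<forall>a\<in>N. hmul R r a \<in> N)"

fun hpow :: "'a hyperring \<Rightarrow> 'a \<Rightarrow> nat \<Rightarrow> 'a" where
  "hpow R b 0 = hone R"
| "hpow R b (Suc k) = hmul R b (hpow R b k)"

text \<open>\<open>\<psi>\<close>-primary hyperideal (as in the paper's definition; properness is stated separately).\<close>
definition phi_primary :: "'a hyperring \<Rightarrow> ('a set \<Rightarrow> 'a set) \<Rightarrow> 'a set \<Rightarrow> bool" where
  "phi_primary R \<psi> N \<longleftrightarrow> hyperideal R N \<and>
     (\<forall>a\<in>carrier R. \<forall>b\<in>carrier R.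
        hmul R a b \<in> N \<and> hmul R a b \<notin> \<psi> N \<longrightarrow> a \<in> N \<or> (\<exists>k\<ge>1. hpow R b k \<in> N))"

definition reduction_fun :: "'a hyperring \<Rightarrow> ('a set \<Rightarrow> 'a set) \<Rightarrow> bool" where
  "reduction_fun R \<phi> \<longleftrightarrow> (\<forall>N. hyperideal R N \<longrightarrow> \<phi> N = {} \<or> hyperideal R (\<phi> N))"

definition coset :: "'a hyperring \<Rightarrow> 'a set \<Rightarrow> 'a \<Rightarrow> 'a set" where
  "coset R M a = (\<Union>m\<in>M. hadd R a m)"

definition quot_hyperring :: "'a hyperring \<Rightarrow> 'a set \<Rightarrow> 'a set hyperring" where
  "quot_hyperring R M =
    \<lparr> carrier = {coset R M a | a. a \<in> carrier R},
      hadd = (\<lambda>X Y. {coset R M c | a b c. a \<in> carrier R \<and> b \<in> carrier R \<and>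
                        X = coset R M a \<and> Y = coset R M b \<and> c \<in> hadd R a b}),
      hmul = (\<lambda>X Y. coset R M (hmul R (SOME a. a \<in> carrier R \<and> X = coset R M a)
                                       (SOME b. b \<in> carrier R \<and> Y = coset R M b))),
      hzero = coset R M (hzero R),
      hone = coset R M (hone R) \<rparr>"

definition quot_set :: "'a hyperring \<Rightarrow> 'a set \<Rightarrow> 'a set \<Rightarrow> 'a set set" where
  "quot_set R M N = {coset R M a | a. a \<in> N}"

text \<open>\<open>\<phi>\<^sub>M(N/M) = (\<phi>(N) \<oplus> M)/M\<close>, where N is recovered from \<open>J = N/M\<close> as the preimage
  of J under the canonical projection.\<close>
definition phi_quot :: "'a hyperring \<Rightarrow> 'a set \<Rightarrow> ('a set \<Rightarrow> 'a set) \<Rightarrow> 'a set set \<Rightarrow> 'a set set" where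
  "phi_quot R M \<phi> J =
    (let N = {a \<in> carrier R. coset R M a \<in> J} in
     if \<phi> N = {} then {}
     else quot_set R M (\<Union>a\<in>\<phi> N. \<Union>m\<in>M. hadd R a m))"

definition mult_closed :: "'a hyperring \<Rightarrow> 'a set \<Rightarrow> bool" where
  "mult_closed R S \<longleftrightarrow> S \<subseteq> carrier R \<and> hone R \<in> S \<and>
     (\<forall>s\<in>S. \<forall>t\<in>S. hmul R s t \<in> S)"

text \<open>The fraction \<open>a/s\<close>: equivalence class of (a,s), where
  \<open>(a,s) ~ (b,t)\<close> iff \<open>u(at) = u(bs)\<close> for some \<open>u \<in> S\<close>.\<close>
definition frac :: "'a hyperring \<Rightarrow> 'a set \<Rightarrow> 'a \<Rightarrow> 'a \<Rightarrow> ('a \<times> 'a) set" where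
  "frac R S a s = {(b, t). b \<in> carrier R \<and> t \<in> S \<and>
      (\<exists>u\<in>S. hmul R u (hmul R a t) = hmul R u (hmul R b s))}"

definition localization :: "'a hyperring \<Rightarrow> 'a set \<Rightarrow> ('a \<times> 'a) set hyperring" where
  "localization R S =
    \<lparr> carrier = {frac R S a s | a s. a \<in> carrier R \<and> s \<in> S},
      hadd = (\<lambda>X Y. {frac R S c (hmul R s t) | a s b t c.
                       a \<in> carrier R \<and> s \<in> S \<and> b \<in> carrier R \<and> t \<in> S \<and>
                       X = frac R S a s \<and> Y = frac R S b t \<and>
                       c \<in> hadd R (hmul R a t) (hmul R b s)}),
      hmul = (\<lambda>X Y. (let (a, s) = (SOME p. fst p \<in> carrier R \<and> snd p \<in> S \<and> X = frac R S (fst p) (snd p));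
                          (b, t) = (SOME p. fst p \<in> carrier R \<and> snd p \<in> S \<and> Y = frac R S (fst p) (snd p))
                      in frac R S (hmul R a b) (hmul R s t))),
      hzero = frac R S (hzero R) (hone R),
      hone = frac R S (hone R) (hone R) \<rparr>"

definition loc_set :: "'a hyperring \<Rightarrow> 'a set \<Rightarrow> 'a set \<Rightarrow> ('a \<times> 'a) set set" where
  "loc_set R S N = {frac R S a s | a s. a \<in> N \<and> s \<in> S}"

definition contract :: "'a hyperring \<Rightarrow> 'a set \<Rightarrow> ('a \<times> 'a) set set \<Rightarrow> 'a set" where
  "contract R S J = {a \<in> carrier R. frac R S a (hone R) \<in> J}"

definition phi_loc :: "'a hyperring \<Rightarrow> 'a set \<Rightarrow> ('a set \<Rightarrow> 'a set) \<Rightarrow> ('a \<times> 'a) set set \<Rightarrow> ('a \<times> 'a) set set" where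
  "phi_loc R S \<phi> J = (if \<phi> (contract R S J) = {} then {} else loc_set R S (\<phi> (contract R S J)))"

end

(* Both parts transport the phi-primary condition along the canonical maps a |-> a + M and
   a |-> a/1; most of the work is computing negatives, products and powers in R/M and R_S on
   representatives, since the record operations are defined through THE and SOME.

   For R/M: as M <= T, a coset a + M lies in T/M iff a lies in T, and a + M lies in phi_M(T/M)
   whenever a lies in phi(T).  For R_S: a/s lies in T_S iff pa lies in T for some p in S.
   If (a/s)(b/t) lies in T_S but not in phi_S(T_S), pick p in S with p(ab) in T; then
   (pa)b is not in phi(T), for otherwise ab/st = pab/pst lies in phi(T)_S, which is contained
   in phi_S(T_S).  Hence pa lies in T, so a/s lies in T_S, or some b^k lies in T, so
   (b/t)^k = b^k/t^k lies in T_S. *)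

theory Submission
  imports Defs
begin

locale krasner =
  fixes R :: "'a hyperring"
  assumes krasner: "krasner_hyperring R"
begin

abbreviation hadd_R (infixl "\<oplus>" 65) where "x \<oplus> y \<equiv> hadd R x y"
abbreviation hmul_R (infixl "\<otimes>" 70) where "x \<otimes> y \<equiv> hmul R x y"
abbreviation "neg \<equiv> hneg R"
abbreviation hzero_R ("\<zero>") where "\<zero> \<equiv> hzero R"
abbreviation hone_R ("\<one>") where "\<one> \<equiv> hone R"

lemma hzero_closed [simp]: "\<zero> \<in> carrier R"
  and hone_closed [simp]: "\<one> \<in> carrier R"
  and hadd_closed: "\<lbrakk>x \<in> carrier R; y \<in> carrier R\<rbrakk> \<Longrightarrow> x \<oplus> y \<subseteq> carrier R"
  and hadd_assoc: "\<lbrakk>x \<in> carrier R; y \<in> carrier R; z \<in> carrier R\<rbrakk> \<Longrightarrow>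
     (\<Union>w\<in>x \<oplus> y. w \<oplus> z) = (\<Union>w\<in>y \<oplus> z. x \<oplus> w)"
  and hadd_comm: "\<lbrakk>x \<in> carrier R; y \<in> carrier R\<rbrakk> \<Longrightarrow> x \<oplus> y = y \<oplus> x"
  and hzero_hadd: "x \<in> carrier R \<Longrightarrow> \<zero> \<oplus> x = {x}"
  and hneg_ex1: "x \<in> carrier R \<Longrightarrow> \<exists>!y. y \<in> carrier R \<and> \<zero> \<in> x \<oplus> y"
  and hadd_reversible: "\<lbrakk>x \<in> carrier R; y \<in> carrier R; z \<in> carrier R; z \<in> x \<oplus> y\<rbrakk>
     \<Longrightarrow> y \<in> z \<oplus> neg x \<and> x \<in> z \<oplus> neg y"
  and hmul_closed [simp]: "\<lbrakk>x \<in> carrier R; y \<in> carrier R\<rbrakk> \<Longrightarrow> x \<otimes> y \<in> carrier R"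
  and hmul_assoc: "\<lbrakk>x \<in> carrier R; y \<in> carrier R; z \<in> carrier R\<rbrakk>
     \<Longrightarrow> x \<otimes> y \<otimes> z = x \<otimes> (y \<otimes> z)"
  and hmul_comm: "\<lbrakk>x \<in> carrier R; y \<in> carrier R\<rbrakk> \<Longrightarrow> x \<otimes> y = y \<otimes> x"
  and hone_hmul [simp]: "x \<in> carrier R \<Longrightarrow> \<one> \<otimes> x = x"
  and hzero_hmul [simp]: "x \<in> carrier R \<Longrightarrow> \<zero> \<otimes> x = \<zero>"
  and hmul_hadd_distrib: "\<lbrakk>x \<in> carrier R; y \<in> carrier R; z \<in> carrier R\<rbrakk> \<Longrightarrow>
     (\<otimes>) x ` (y \<oplus> z) = x \<otimes> y \<oplus> x \<otimes> z"
  by (insert krasner, unfold krasner_hyperring_def) (elim conjE, simp)+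

lemma hadd_mem_closed: "\<lbrakk>z \<in> x \<oplus> y; x \<in> carrier R; y \<in> carrier R\<rbrakk> \<Longrightarrow> z \<in> carrier R"
  using hadd_closed by blast

lemma hadd_hzero: "x \<in> carrier R \<Longrightarrow> x \<oplus> \<zero> = {x}"
  using hzero_hadd hadd_comm by simp

lemma hadd_assoc_mem:
  assumes "x \<in> carrier R" "y \<in> carrier R" "z \<in> carrier R" "w \<in> x \<oplus> y" "v \<in> w \<oplus> z"
  obtains u where "u \<in> y \<oplus> z" "v \<in> x \<oplus> u"
  using hadd_assoc[of x y z] assms by blast

lemma hneg_spec: "x \<in> carrier R \<Longrightarrow> neg x \<in> carrier R \<and> \<zero> \<in> x \<oplus> neg x"
  unfolding hneg_def by (rule theI'[OF hneg_ex1])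

lemma hneg_closed [simp]: "x \<in> carrier R \<Longrightarrow> neg x \<in> carrier R"
  and hzero_mem_hadd_hneg: "x \<in> carrier R \<Longrightarrow> \<zero> \<in> x \<oplus> neg x"
  using hneg_spec by blast+

lemma hneg_unique: "\<lbrakk>x \<in> carrier R; y \<in> carrier R; \<zero> \<in> x \<oplus> y\<rbrakk> \<Longrightarrow> y = neg x"
  using hneg_ex1 hneg_spec by blast

lemma hneg_hneg [simp]: "x \<in> carrier R \<Longrightarrow> neg (neg x) = x"
  using hneg_unique[of "neg x" x] hzero_mem_hadd_hneg[of x] hadd_comm[of x "neg x"] by simp

lemma hmul_left_commute:
  "\<lbrakk>x \<in> carrier R; y \<in> carrier R; z \<in> carrier R\<rbrakk> \<Longrightarrow> x \<otimes> (y \<otimes> z) = y \<otimes> (x \<otimes> z)"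
  by (metis hmul_assoc hmul_comm)

lemmas hmul_ac = hmul_assoc hmul_comm hmul_left_commute

lemma hmul_hone [simp]: "x \<in> carrier R \<Longrightarrow> x \<otimes> \<one> = x"
  by (metis hmul_comm hone_closed hone_hmul)

lemma hmul_hzero [simp]: "x \<in> carrier R \<Longrightarrow> x \<otimes> \<zero> = \<zero>"
  by (metis hmul_comm hzero_closed hzero_hmul)

lemma hmul_hadd_mem:
  "\<lbrakk>x \<in> carrier R; y \<in> carrier R; z \<in> carrier R; c \<in> y \<oplus> z\<rbrakk> \<Longrightarrow> x \<otimes> c \<in> x \<otimes> y \<oplus> x \<otimes> z"
  using hmul_hadd_distrib[of x y z] by blast

lemma hmul_hneg [simp]: "\<lbrakk>x \<in> carrier R; y \<in> carrier R\<rbrakk> \<Longrightarrow> x \<otimes> neg y = neg (x \<otimes> y)"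
  using hneg_unique hmul_hadd_mem[OF _ _ _ hzero_mem_hadd_hneg] by simp

lemma hneg_hmul [simp]: "\<lbrakk>x \<in> carrier R; y \<in> carrier R\<rbrakk> \<Longrightarrow> neg x \<otimes> y = neg (x \<otimes> y)"
  using hmul_comm by (metis hmul_hneg hneg_closed)

lemma hpow_closed [simp]: "x \<in> carrier R \<Longrightarrow> hpow R x k \<in> carrier R"
  by (induction k) auto

lemma hyperideal_subset: "hyperideal R N \<Longrightarrow> N \<subseteq> carrier R"
  and hyperideal_hmul: "\<lbrakk>hyperideal R N; r \<in> carrier R; a \<in> N\<rbrakk> \<Longrightarrow> r \<otimes> a \<in> N"
  unfolding hyperideal_def by blast+

lemma hyperideal_hmul_right: "\<lbrakk>hyperideal R N; r \<in> carrier R; a \<in> N\<rbrakk> \<Longrightarrow> a \<otimes> r \<in> N"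
  using hyperideal_hmul hyperideal_subset hmul_comm by (metis subsetD)

lemma hyperideal_hzero: "hyperideal R N \<Longrightarrow> \<zero> \<in> N"
  unfolding hyperideal_def by (metis all_not_in_conv hzero_mem_hadd_hneg subsetD)

lemma hyperideal_hneg: "\<lbrakk>hyperideal R N; a \<in> N\<rbrakk> \<Longrightarrow> neg a \<in> N"
proof -
  assume "hyperideal R N" "a \<in> N"
  moreover from this have "a \<in> carrier R" using hyperideal_subset by blast
  ultimately show ?thesis using hyperideal_hmul[of N "neg \<one>" a] by simp
qed

lemma hyperideal_hadd: "\<lbrakk>hyperideal R N; a \<in> N; b \<in> N\<rbrakk> \<Longrightarrow> a \<oplus> b \<subseteq> N"
  using hyperideal_hneg[of N b] hyperideal_subset[of N] unfolding hyperideal_def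
  by (metis hneg_hneg subsetD)

end

locale krasner_quotient = krasner +
  fixes M :: "'a set"
  assumes hyperideal_M: "hyperideal R M"
begin

lemma mem_coset_iff: "z \<in> coset R M y \<longleftrightarrow> (\<exists>m\<in>M. z \<in> y \<oplus> m)"
  unfolding coset_def by blast

lemma coset_self: "a \<in> carrier R \<Longrightarrow> a \<in> coset R M a"
  using hyperideal_hzero[OF hyperideal_M] hadd_hzero[of a] unfolding mem_coset_iff by blast

lemma coset_hzero: "coset R M \<zero> = M"
  using hyperideal_subset[OF hyperideal_M] hzero_hadd unfolding coset_def by auto

lemma coset_subset_if_mem:
  assumes y: "y \<in> carrier R" and m: "m \<in> M" and x: "x \<in> y \<oplus> m"
  shows "coset R M x \<subseteq> coset R M y"
proof
  fix z assume "z \<in> coset R M x"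
  then obtain n where n: "n \<in> M" "z \<in> x \<oplus> n" unfolding mem_coset_iff by blast
  have "m \<in> carrier R" "n \<in> carrier R" using m n hyperideal_subset[OF hyperideal_M] by auto
  then obtain u where "u \<in> m \<oplus> n" "z \<in> y \<oplus> u"
    using hadd_assoc_mem y x n by metis
  moreover have "m \<oplus> n \<subseteq> M" using hyperideal_hadd[OF hyperideal_M m n(1)] .
  ultimately show "z \<in> coset R M y" unfolding mem_coset_iff by blast
qed

lemma coset_eq_if_mem:
  assumes y: "y \<in> carrier R" and m: "m \<in> M" and x: "x \<in> y \<oplus> m"
  shows "coset R M x = coset R M y"
proof
  show "coset R M x \<subseteq> coset R M y" using coset_subset_if_mem[OF assms] .
  have mC: "m \<in> carrier R" using m hyperideal_subset[OF hyperideal_M] by blast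
  then have "x \<in> carrier R" using hadd_mem_closed x y by blast
  moreover have "y \<in> x \<oplus> neg m" using hadd_reversible[OF y mC _ x] \<open>x \<in> carrier R\<close> by blast
  ultimately show "coset R M y \<subseteq> coset R M x"
    using coset_subset_if_mem hyperideal_hneg[OF hyperideal_M m] by blast
qed

lemma coset_eq_iff:
  assumes x: "x \<in> carrier R" and y: "y \<in> carrier R"
  shows "coset R M x = coset R M y \<longleftrightarrow> x \<in> coset R M y"
proof
  assume "coset R M x = coset R M y"
  then show "x \<in> coset R M y" using coset_self[OF x] by simp
next
  assume "x \<in> coset R M y"
  then show "coset R M x = coset R M y" using coset_eq_if_mem[OF y] unfolding mem_coset_iff by blast
qed

lemma coset_subset_hyperideal:
  "\<lbrakk>hyperideal R N; M \<subseteq> N; t \<in> N\<rbrakk> \<Longrightarrow> coset R M t \<subseteq> N"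
  using hyperideal_hadd unfolding coset_def by blast

lemma coset_hmul_cong:
  assumes "a \<in> carrier R" "a' \<in> carrier R" "b \<in> carrier R" "coset R M a' = coset R M a"
  shows "coset R M (a' \<otimes> b) = coset R M (a \<otimes> b)"
proof -
  obtain m where m: "m \<in> M" "a' \<in> a \<oplus> m"
    using assms coset_eq_iff unfolding mem_coset_iff by blast
  have "m \<in> carrier R" using m hyperideal_subset[OF hyperideal_M] by blast
  then have "b \<otimes> a' \<in> b \<otimes> a \<oplus> b \<otimes> m" using hmul_hadd_mem assms m by blast
  then have "coset R M (b \<otimes> a') = coset R M (b \<otimes> a)"
    using coset_eq_if_mem hyperideal_hmul[OF hyperideal_M assms(3) m(1)] hmul_closed assms(1,3)
    by blast
  then show ?thesis using hmul_comm assms by simp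
qed

lemma coset_hneg_cong:
  "\<lbrakk>a \<in> carrier R; a' \<in> carrier R; coset R M a' = coset R M a\<rbrakk>
   \<Longrightarrow> coset R M (neg a') = coset R M (neg a)"
  using coset_hmul_cong[of a a' "neg \<one>"] by simp

lemma carrier_quot: "carrier (quot_hyperring R M) = {coset R M a | a. a \<in> carrier R}"
  and hadd_quot: "hadd (quot_hyperring R M) X Y =
     {coset R M c | a b c. a \<in> carrier R \<and> b \<in> carrier R \<and>
        X = coset R M a \<and> Y = coset R M b \<and> c \<in> a \<oplus> b}"
  and hzero_quot: "hzero (quot_hyperring R M) = coset R M \<zero>"
  and hone_quot: "hone (quot_hyperring R M) = coset R M \<one>"
  unfolding quot_hyperring_def by simp_all

lemma coset_mem_hadd_quot:
  "\<lbrakk>a \<in> carrier R; b \<in> carrier R; c \<in> a \<oplus> b\<rbrakk>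
   \<Longrightarrow> coset R M c \<in> hadd (quot_hyperring R M) (coset R M a) (coset R M b)"
  unfolding hadd_quot by blast

lemma hmul_quot:
  assumes a: "a \<in> carrier R" and b: "b \<in> carrier R"
  shows "hmul (quot_hyperring R M) (coset R M a) (coset R M b) = coset R M (a \<otimes> b)"
proof -
  define a' where "a' = (SOME x. x \<in> carrier R \<and> coset R M a = coset R M x)"
  define b' where "b' = (SOME x. x \<in> carrier R \<and> coset R M b = coset R M x)"
  have "a' \<in> carrier R \<and> coset R M a = coset R M a'"
    unfolding a'_def by (rule someI[of _ a]) (simp add: a)
  then have a': "a' \<in> carrier R" "coset R M a' = coset R M a" by simp_all
  have "b' \<in> carrier R \<and> coset R M b = coset R M b'"
    unfolding b'_def by (rule someI[of _ b]) (simp add: b)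
  then have b': "b' \<in> carrier R" "coset R M b' = coset R M b" by simp_all
  have "hmul (quot_hyperring R M) (coset R M a) (coset R M b) = coset R M (a' \<otimes> b')"
    unfolding quot_hyperring_def a'_def b'_def by simp
  also have "\<dots> = coset R M (a \<otimes> b')" by (rule coset_hmul_cong[OF a a'(1) b'(1) a'(2)])
  also have "\<dots> = coset R M (b' \<otimes> a)" using hmul_comm a b'(1) by simp
  also have "\<dots> = coset R M (b \<otimes> a)" by (rule coset_hmul_cong[OF b b'(1) a b'(2)])
  finally show ?thesis using hmul_comm a b by simp
qed

lemma hneg_quot:
  assumes a: "a \<in> carrier R"
  shows "hneg (quot_hyperring R M) (coset R M a) = coset R M (neg a)"
  unfolding hneg_def[of "quot_hyperring R M"]
proof (rule the_equality)
  show "coset R M (neg a) \<in> carrier (quot_hyperring R M) \<and>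
      hzero (quot_hyperring R M) \<in> hadd (quot_hyperring R M) (coset R M a) (coset R M (neg a))"
    unfolding carrier_quot hzero_quot
    using hneg_closed[OF a] coset_mem_hadd_quot[OF a hneg_closed[OF a] hzero_mem_hadd_hneg[OF a]]
    by blast
next
  fix Y assume "Y \<in> carrier (quot_hyperring R M) \<and>
      hzero (quot_hyperring R M) \<in> hadd (quot_hyperring R M) (coset R M a) Y"
  then obtain a' b' c where a': "a' \<in> carrier R" "coset R M a = coset R M a'"
    and b': "b' \<in> carrier R" "Y = coset R M b'"
    and c: "c \<in> a' \<oplus> b'" "coset R M \<zero> = coset R M c"
    unfolding hadd_quot hzero_quot by blast
  have cC: "c \<in> carrier R" using hadd_mem_closed[OF c(1) a'(1) b'(1)] .
  have "c \<in> M" using coset_self[OF cC] c(2) coset_hzero by simp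
  moreover have "b' \<in> neg a' \<oplus> c"
    using hadd_reversible[OF a'(1) b'(1) cC c(1)] hadd_comm[OF cC hneg_closed[OF a'(1)]] by simp
  ultimately have "coset R M b' = coset R M (neg a')"
    by (rule coset_eq_if_mem[OF hneg_closed[OF a'(1)]])
  also have "\<dots> = coset R M (neg a)" by (rule coset_hneg_cong[OF a a'(1) a'(2)[symmetric]])
  finally show "Y = coset R M (neg a)" using b'(2) by simp
qed

lemma hpow_quot:
  "b \<in> carrier R \<Longrightarrow> hpow (quot_hyperring R M) (coset R M b) k = coset R M (hpow R b k)"
  by (induction k) (simp_all add: hone_quot hmul_quot)

lemma coset_mem_quot_set_iff:
  assumes N: "hyperideal R N" and MN: "M \<subseteq> N" and x: "x \<in> carrier R"
  shows "coset R M x \<in> quot_set R M N \<longleftrightarrow> x \<in> N"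
proof
  assume "coset R M x \<in> quot_set R M N"
  then obtain t where t: "t \<in> N" "coset R M x = coset R M t" unfolding quot_set_def by blast
  then have "x \<in> coset R M t" using coset_eq_iff x hyperideal_subset[OF N] by blast
  then show "x \<in> N" using coset_subset_hyperideal[OF N MN t(1)] by blast
qed (auto simp: quot_set_def)

lemma hadd_quot_subset_quot_set:
  assumes N: "hyperideal R N" and MN: "M \<subseteq> N"
    and X: "X \<in> quot_set R M N" and Y: "Y \<in> quot_set R M N"
  shows "hadd (quot_hyperring R M) X Y \<subseteq> quot_set R M N"
proof
  fix Z assume Z: "Z \<in> hadd (quot_hyperring R M) X Y"
  obtain a b where ab: "a \<in> N" "X = coset R M a" "b \<in> N" "Y = coset R M b"
    using X Y unfolding quot_set_def by blast
  obtain a' b' c where a': "a' \<in> carrier R" "coset R M a = coset R M a'"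
    and b': "b' \<in> carrier R" "coset R M b = coset R M b'"
    and c: "c \<in> a' \<oplus> b'" "Z = coset R M c"
    using Z ab(2,4) unfolding hadd_quot by auto
  have "a \<in> carrier R" "b \<in> carrier R" using ab hyperideal_subset[OF N] by blast+
  then have "a' \<in> coset R M a" "b' \<in> coset R M b"
    using coset_eq_iff a'(1) b'(1) a'(2)[symmetric] b'(2)[symmetric] by blast+
  then have "a' \<in> N" "b' \<in> N" using coset_subset_hyperideal[OF N MN] ab(1,3) by blast+
  then show "Z \<in> quot_set R M N" using c hyperideal_hadd[OF N] unfolding quot_set_def by blast
qed

lemma hyperideal_quot_set:
  assumes N: "hyperideal R N" and MN: "M \<subseteq> N"
  shows "hyperideal (quot_hyperring R M) (quot_set R M N)"
  unfolding hyperideal_def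
proof (intro conjI ballI)
  show "quot_set R M N \<subseteq> carrier (quot_hyperring R M)"
    using hyperideal_subset[OF N] unfolding carrier_quot quot_set_def by blast
  show "quot_set R M N \<noteq> {}" using hyperideal_hzero[OF N] unfolding quot_set_def by blast
next
  fix X Y assume X: "X \<in> quot_set R M N" and "Y \<in> quot_set R M N"
  then obtain b where b: "b \<in> N" "Y = coset R M b" unfolding quot_set_def by blast
  then have "hneg (quot_hyperring R M) Y = coset R M (neg b)"
    using hneg_quot hyperideal_subset[OF N] by blast
  then have "hneg (quot_hyperring R M) Y \<in> quot_set R M N"
    using hyperideal_hneg[OF N b(1)] unfolding quot_set_def by blast
  then show "hadd (quot_hyperring R M) X (hneg (quot_hyperring R M) Y) \<subseteq> quot_set R M N"
    using hadd_quot_subset_quot_set[OF N MN X] by blast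
next
  fix X Y assume "X \<in> carrier (quot_hyperring R M)" "Y \<in> quot_set R M N"
  then obtain r a where "r \<in> carrier R" "a \<in> N" "X = coset R M r" "Y = coset R M a"
    unfolding carrier_quot quot_set_def by blast
  then show "hmul (quot_hyperring R M) X Y \<in> quot_set R M N"
    using hmul_quot hyperideal_hmul[OF N] hyperideal_subset[OF N] unfolding quot_set_def by blast
qed

lemma coset_mem_phi_quot:
  assumes N: "hyperideal R N" and MN: "M \<subseteq> N" and x: "x \<in> carrier R" "x \<in> \<phi> N"
  shows "coset R M x \<in> phi_quot R M \<phi> (quot_set R M N)"
proof -
  have "{a \<in> carrier R. coset R M a \<in> quot_set R M N} = N"
    using coset_mem_quot_set_iff[OF N MN] hyperideal_subset[OF N] by blast
  moreover have "x \<in> (\<Union>a\<in>\<phi> N. \<Union>m\<in>M. a \<oplus> m)"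
    using x hadd_hzero hyperideal_hzero[OF hyperideal_M] by blast
  ultimately show ?thesis using x unfolding phi_quot_def quot_set_def by auto
qed

lemma phi_primary_quot:
  assumes T: "phi_primary R \<phi> T" and MT: "M \<subseteq> T"
  shows "phi_primary (quot_hyperring R M) (phi_quot R M \<phi>) (quot_set R M T)"
proof -
  have hT: "hyperideal R T" using T unfolding phi_primary_def by blast
  have "X \<in> quot_set R M T \<or> (\<exists>k\<ge>1. hpow (quot_hyperring R M) Y k \<in> quot_set R M T)"
    if X: "X \<in> carrier (quot_hyperring R M)" and Y: "Y \<in> carrier (quot_hyperring R M)"
      and XY: "hmul (quot_hyperring R M) X Y \<in> quot_set R M T"
        "hmul (quot_hyperring R M) X Y \<notin> phi_quot R M \<phi> (quot_set R M T)"
    for X Y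
  proof -
    obtain a b where a: "a \<in> carrier R" "X = coset R M a" and b: "b \<in> carrier R" "Y = coset R M b"
      using X Y unfolding carrier_quot by blast
    then have "hmul (quot_hyperring R M) X Y = coset R M (a \<otimes> b)" using hmul_quot by simp
    moreover have "a \<otimes> b \<in> carrier R" using a b by simp
    ultimately have "a \<otimes> b \<in> T" "a \<otimes> b \<notin> \<phi> T"
      using XY coset_mem_quot_set_iff[OF hT MT] coset_mem_phi_quot[OF hT MT] by metis+
    then have "a \<in> T \<or> (\<exists>k\<ge>1. hpow R b k \<in> T)"
      using T a b unfolding phi_primary_def by blast
    moreover have "hpow (quot_hyperring R M) Y k = coset R M (hpow R b k)" for k
      using b hpow_quot by simp
    ultimately show ?thesis using a b coset_mem_quot_set_iff[OF hT MT] by simp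
  qed
  then show ?thesis
    unfolding phi_primary_def using hyperideal_quot_set[OF hT MT] by blast
qed

end

locale krasner_localization = krasner +
  fixes S :: "'a set"
  assumes mult_closed_S: "mult_closed R S"
begin

lemma mult_closed_subset: "s \<in> S \<Longrightarrow> s \<in> carrier R"
  and hone_mult_closed: "\<one> \<in> S"
  and hmul_mult_closed: "\<lbrakk>s \<in> S; t \<in> S\<rbrakk> \<Longrightarrow> s \<otimes> t \<in> S"
  using mult_closed_S unfolding mult_closed_def by blast+

lemma hpow_mult_closed: "s \<in> S \<Longrightarrow> hpow R s k \<in> S"
  by (induction k) (simp_all add: hone_mult_closed hmul_mult_closed)

lemma mem_frac_iff:
  "(b, t) \<in> frac R S a s \<longleftrightarrow> b \<in> carrier R \<and> t \<in> S \<and> (\<exists>u\<in>S. u \<otimes> (a \<otimes> t) = u \<otimes> (b \<otimes> s))"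
  unfolding frac_def by simp

lemma frac_refl: "\<lbrakk>a \<in> carrier R; s \<in> S\<rbrakk> \<Longrightarrow> (a, s) \<in> frac R S a s"
  unfolding mem_frac_iff using hone_mult_closed by blast

lemma frac_sym: "\<lbrakk>a \<in> carrier R; s \<in> S; (b, t) \<in> frac R S a s\<rbrakk> \<Longrightarrow> (a, s) \<in> frac R S b t"
  unfolding mem_frac_iff by metis

lemma frac_euclidean:
  assumes a: "a \<in> carrier R" "s \<in> S"
    and bt: "(b, t) \<in> frac R S a s" and cw: "(c, w) \<in> frac R S a s"
  shows "(c, w) \<in> frac R S b t"
proof -
  obtain u where b: "b \<in> carrier R" "t \<in> S" and u: "u \<in> S" "u \<otimes> (a \<otimes> t) = u \<otimes> (b \<otimes> s)"
    using bt unfolding mem_frac_iff by blast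
  obtain v where c: "c \<in> carrier R" "w \<in> S" and v: "v \<in> S" "v \<otimes> (a \<otimes> w) = v \<otimes> (c \<otimes> s)"
    using cw unfolding mem_frac_iff by blast
  have C: "s \<in> carrier R" "t \<in> carrier R" "w \<in> carrier R" "u \<in> carrier R" "v \<in> carrier R"
    using a b c u v mult_closed_subset by auto
  have "u \<otimes> (v \<otimes> s) \<otimes> (b \<otimes> w) = v \<otimes> w \<otimes> (u \<otimes> (b \<otimes> s))"
    using a b c C by (simp add: hmul_ac)
  also have "\<dots> = v \<otimes> w \<otimes> (u \<otimes> (a \<otimes> t))" using u by simp
  also have "\<dots> = u \<otimes> t \<otimes> (v \<otimes> (a \<otimes> w))" using a b c C by (simp add: hmul_ac)
  also have "\<dots> = u \<otimes> t \<otimes> (v \<otimes> (c \<otimes> s))" using v by simp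
  also have "\<dots> = u \<otimes> (v \<otimes> s) \<otimes> (c \<otimes> t)" using a b c C by (simp add: hmul_ac)
  finally show ?thesis
    unfolding mem_frac_iff using c hmul_mult_closed[OF u(1) hmul_mult_closed[OF v(1) a(2)]] by blast
qed

lemma frac_eq_iff:
  assumes a: "a \<in> carrier R" "s \<in> S" and b: "b \<in> carrier R" "t \<in> S"
  shows "frac R S a s = frac R S b t \<longleftrightarrow> (\<exists>u\<in>S. u \<otimes> (a \<otimes> t) = u \<otimes> (b \<otimes> s))"
proof -
  have "frac R S a s = frac R S b t \<longleftrightarrow> (b, t) \<in> frac R S a s"
  proof
    assume "(b, t) \<in> frac R S a s"
    then have "(c, w) \<in> frac R S a s \<longleftrightarrow> (c, w) \<in> frac R S b t" for c w
      using frac_euclidean[OF a] frac_euclidean[OF b] frac_sym[OF a] by blast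
    then show "frac R S a s = frac R S b t" by auto
  qed (use frac_refl[OF b] in simp)
  then show ?thesis using b unfolding mem_frac_iff by simp
qed

lemma frac_eqI:
  "\<lbrakk>a \<in> carrier R; s \<in> S; b \<in> carrier R; t \<in> S; u \<in> S; u \<otimes> (a \<otimes> t) = u \<otimes> (b \<otimes> s)\<rbrakk>
   \<Longrightarrow> frac R S a s = frac R S b t"
  using frac_eq_iff by blast

lemma frac_scale:
  assumes "a \<in> carrier R" "s \<in> S" "p \<in> S"
  shows "frac R S a s = frac R S (p \<otimes> a) (p \<otimes> s)"
proof (rule frac_eqI[OF assms(1,2) _ _ hone_mult_closed])
  have "s \<in> carrier R" "p \<in> carrier R" using assms mult_closed_subset by auto
  then show "\<one> \<otimes> (a \<otimes> (p \<otimes> s)) = \<one> \<otimes> (p \<otimes> a \<otimes> s)" using assms(1) by (simp add: hmul_ac)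
qed (use assms mult_closed_subset hmul_mult_closed in auto)

lemma carrier_loc: "carrier (localization R S) = {frac R S a s | a s. a \<in> carrier R \<and> s \<in> S}"
  and hadd_loc: "hadd (localization R S) X Y =
     {frac R S c (s \<otimes> t) | a s b t c. a \<in> carrier R \<and> s \<in> S \<and> b \<in> carrier R \<and> t \<in> S \<and>
        X = frac R S a s \<and> Y = frac R S b t \<and> c \<in> a \<otimes> t \<oplus> b \<otimes> s}"
  and hzero_loc: "hzero (localization R S) = frac R S \<zero> \<one>"
  and hone_loc: "hone (localization R S) = frac R S \<one> \<one>"
  unfolding localization_def by simp_all

lemma frac_mem_hadd_loc:
  "\<lbrakk>a \<in> carrier R; s \<in> S; b \<in> carrier R; t \<in> S; c \<in> a \<otimes> t \<oplus> b \<otimes> s\<rbrakk>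
   \<Longrightarrow> frac R S c (s \<otimes> t) \<in> hadd (localization R S) (frac R S a s) (frac R S b t)"
  unfolding hadd_loc by blast

lemma hmul_frac_cong:
  assumes a: "a \<in> carrier R" "s \<in> S" "a' \<in> carrier R" "s' \<in> S"
    and b: "b \<in> carrier R" "t \<in> S" "b' \<in> carrier R" "t' \<in> S"
    and eq: "frac R S a s = frac R S a' s'" "frac R S b t = frac R S b' t'"
  shows "frac R S (a \<otimes> b) (s \<otimes> t) = frac R S (a' \<otimes> b') (s' \<otimes> t')"
proof -
  obtain u where u: "u \<in> S" "u \<otimes> (a \<otimes> s') = u \<otimes> (a' \<otimes> s)" using eq(1) frac_eq_iff a by blast
  obtain v where v: "v \<in> S" "v \<otimes> (b \<otimes> t') = v \<otimes> (b' \<otimes> t)" using eq(2) frac_eq_iff b by blast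
  have C: "s \<in> carrier R" "t \<in> carrier R" "s' \<in> carrier R" "t' \<in> carrier R"
    "u \<in> carrier R" "v \<in> carrier R"
    using a b u v mult_closed_subset by auto
  have "u \<otimes> v \<otimes> (a \<otimes> b \<otimes> (s' \<otimes> t')) = u \<otimes> (a \<otimes> s') \<otimes> (v \<otimes> (b \<otimes> t'))"
    using a b C by (simp add: hmul_ac)
  also have "\<dots> = u \<otimes> (a' \<otimes> s) \<otimes> (v \<otimes> (b' \<otimes> t))" using u v by simp
  also have "\<dots> = u \<otimes> v \<otimes> (a' \<otimes> b' \<otimes> (s \<otimes> t))" using a b C by (simp add: hmul_ac)
  finally show ?thesis
    by (rule frac_eqI[OF hmul_closed[OF a(1) b(1)] hmul_mult_closed[OF a(2) b(2)]
          hmul_closed[OF a(3) b(3)] hmul_mult_closed[OF a(4) b(4)] hmul_mult_closed[OF u(1) v(1)]])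
qed

lemma hmul_loc:
  assumes a: "a \<in> carrier R" "s \<in> S" and b: "b \<in> carrier R" "t \<in> S"
  shows "hmul (localization R S) (frac R S a s) (frac R S b t) = frac R S (a \<otimes> b) (s \<otimes> t)"
proof -
  define p where "p = (SOME p. fst p \<in> carrier R \<and> snd p \<in> S \<and> frac R S a s = frac R S (fst p) (snd p))"
  define q where "q = (SOME q. fst q \<in> carrier R \<and> snd q \<in> S \<and> frac R S b t = frac R S (fst q) (snd q))"
  have p: "fst p \<in> carrier R \<and> snd p \<in> S \<and> frac R S a s = frac R S (fst p) (snd p)"
    unfolding p_def by (rule someI[of _ "(a, s)"]) (simp add: a)
  have q: "fst q \<in> carrier R \<and> snd q \<in> S \<and> frac R S b t = frac R S (fst q) (snd q)"
    unfolding q_def by (rule someI[of _ "(b, t)"]) (simp add: b)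
  have "hmul (localization R S) (frac R S a s) (frac R S b t)
      = frac R S (fst p \<otimes> fst q) (snd p \<otimes> snd q)"
    unfolding localization_def p_def q_def by (simp add: Let_def split_beta)
  also have "\<dots> = frac R S (a \<otimes> b) (s \<otimes> t)"
    using hmul_frac_cong[of "fst p" "snd p" a s "fst q" "snd q" b t] p q a b by simp
  finally show ?thesis .
qed

lemma frac_hneg_cong:
  assumes "a \<in> carrier R" "s \<in> S" "a' \<in> carrier R" "s' \<in> S" "frac R S a s = frac R S a' s'"
  shows "frac R S (neg a) s = frac R S (neg a') s'"
  using hmul_frac_cong[OF hneg_closed[OF hone_closed] hone_mult_closed
      hneg_closed[OF hone_closed] hone_mult_closed assms(1-4) refl assms(5)]
    assms mult_closed_subset by simp

lemma hneg_loc: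
  assumes a: "a \<in> carrier R" and s: "s \<in> S"
  shows "hneg (localization R S) (frac R S a s) = frac R S (neg a) s"
  unfolding hneg_def[of "localization R S"]
proof (rule the_equality)
  have sC: "s \<in> carrier R" using s mult_closed_subset by blast
  have "\<zero> \<in> a \<otimes> s \<oplus> neg a \<otimes> s" using hzero_mem_hadd_hneg[of "a \<otimes> s"] a sC by simp
  moreover have "frac R S \<zero> \<one> = frac R S \<zero> (s \<otimes> s)"
    using frac_eqI[OF hzero_closed hone_mult_closed hzero_closed hmul_mult_closed[OF s s]
        hone_mult_closed] sC by simp
  ultimately show "frac R S (neg a) s \<in> carrier (localization R S) \<and>
      hzero (localization R S) \<in> hadd (localization R S) (frac R S a s) (frac R S (neg a) s)"
    unfolding carrier_loc hzero_loc
    using frac_mem_hadd_loc[OF a s hneg_closed[OF a] s] a s by fastforce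
next
  fix Y assume "Y \<in> carrier (localization R S) \<and>
      hzero (localization R S) \<in> hadd (localization R S) (frac R S a s) Y"
  then obtain a' s' b t c where a': "a' \<in> carrier R" "s' \<in> S" "frac R S a s = frac R S a' s'"
    and b: "b \<in> carrier R" "t \<in> S" "Y = frac R S b t"
    and c: "c \<in> a' \<otimes> t \<oplus> b \<otimes> s'" "frac R S \<zero> \<one> = frac R S c (s' \<otimes> t)"
    unfolding hadd_loc hzero_loc by blast
  have C: "s' \<in> carrier R" "t \<in> carrier R" using a' b mult_closed_subset by auto
  then have cC: "c \<in> carrier R" using hadd_mem_closed[OF c(1)] a' b by simp
  obtain u where u: "u \<in> S" "u \<otimes> (\<zero> \<otimes> (s' \<otimes> t)) = u \<otimes> (c \<otimes> \<one>)"
    using c(2) frac_eq_iff cC hone_mult_closed hmul_mult_closed a'(2) b(2) by auto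
  have uC: "u \<in> carrier R" using u mult_closed_subset by blast
  have "u \<otimes> c \<in> u \<otimes> (a' \<otimes> t) \<oplus> u \<otimes> (b \<otimes> s')"
    using hmul_hadd_mem[OF uC _ _ c(1)] a' b C by simp
  moreover have "u \<otimes> c = \<zero>" using u uC cC C by simp
  ultimately have "u \<otimes> (b \<otimes> s') = neg (u \<otimes> (a' \<otimes> t))"
    using hneg_unique uC a' b C by simp
  also have "\<dots> = u \<otimes> (neg a' \<otimes> t)" using uC a' C by simp
  finally have "frac R S b t = frac R S (neg a') s'"
    using frac_eqI[OF b(1,2) hneg_closed[OF a'(1)] a'(2) u(1)] by simp
  also have "\<dots> = frac R S (neg a) s" using frac_hneg_cong[OF a'(1,2) a s a'(3)[symmetric]] .
  finally show "Y = frac R S (neg a) s" using b(3) by simp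
qed

lemma hpow_loc:
  "\<lbrakk>b \<in> carrier R; t \<in> S\<rbrakk> \<Longrightarrow> hpow (localization R S) (frac R S b t) k = frac R S (hpow R b k) (hpow R t k)"
  by (induction k) (simp_all add: hone_loc hmul_loc hpow_mult_closed)

lemma frac_mem_loc_set_iff:
  assumes N: "hyperideal R N" and a: "a \<in> carrier R" and s: "s \<in> S"
  shows "frac R S a s \<in> loc_set R S N \<longleftrightarrow> (\<exists>p\<in>S. p \<otimes> a \<in> N)"
proof
  assume "frac R S a s \<in> loc_set R S N"
  then obtain n w where n: "n \<in> N" "w \<in> S" "frac R S a s = frac R S n w"
    unfolding loc_set_def by blast
  have C: "n \<in> carrier R" "w \<in> carrier R" "s \<in> carrier R"
    using n s hyperideal_subset[OF N] mult_closed_subset by auto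
  obtain u where u: "u \<in> S" "u \<otimes> (a \<otimes> w) = u \<otimes> (n \<otimes> s)"
    using n(3) frac_eq_iff a s C(1) n(2) by blast
  have uC: "u \<in> carrier R" using u mult_closed_subset by blast
  have "u \<otimes> w \<otimes> a = u \<otimes> (n \<otimes> s)" using u(2) a uC C by (simp add: hmul_ac)
  also have "\<dots> \<in> N" using hyperideal_hmul[OF N uC hyperideal_hmul_right[OF N C(3) n(1)]] .
  finally show "\<exists>p\<in>S. p \<otimes> a \<in> N" using hmul_mult_closed[OF u(1) n(2)] by blast
next
  assume "\<exists>p\<in>S. p \<otimes> a \<in> N"
  then obtain p where "p \<in> S" "p \<otimes> a \<in> N" by blast
  then show "frac R S a s \<in> loc_set R S N"
    using frac_scale[OF a s] hmul_mult_closed[OF _ s] unfolding loc_set_def by blast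
qed

lemma hadd_loc_subset_loc_set:
  assumes N: "hyperideal R N" and X: "X \<in> loc_set R S N" and Y: "Y \<in> loc_set R S N"
  shows "hadd (localization R S) X Y \<subseteq> loc_set R S N"
proof
  fix Z assume Z: "Z \<in> hadd (localization R S) X Y"
  obtain a s b t where a: "a \<in> N" "s \<in> S" "X = frac R S a s"
    and b: "b \<in> N" "t \<in> S" "Y = frac R S b t"
    using X Y unfolding loc_set_def by blast
  obtain a' s' b' t' c where a': "a' \<in> carrier R" "s' \<in> S" "frac R S a s = frac R S a' s'"
    and b': "b' \<in> carrier R" "t' \<in> S" "frac R S b t = frac R S b' t'"
    and c: "c \<in> a' \<otimes> t' \<oplus> b' \<otimes> s'" "Z = frac R S c (s' \<otimes> t')"
    using Z a(3) b(3) unfolding hadd_loc by auto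
  have "frac R S a' s' \<in> loc_set R S N" "frac R S b' t' \<in> loc_set R S N"
    using a b a'(3) b'(3) unfolding loc_set_def by blast+
  then obtain p q where p: "p \<in> S" "p \<otimes> a' \<in> N" and q: "q \<in> S" "q \<otimes> b' \<in> N"
    using frac_mem_loc_set_iff[OF N] a' b' by meson
  have C: "p \<in> carrier R" "q \<in> carrier R" "s' \<in> carrier R" "t' \<in> carrier R"
    using p q a' b' mult_closed_subset by auto
  have "p \<otimes> q \<otimes> c \<in> p \<otimes> q \<otimes> (a' \<otimes> t') \<oplus> p \<otimes> q \<otimes> (b' \<otimes> s')"
    using hmul_hadd_mem[OF _ _ _ c(1)] a' b' C by simp
  moreover have "p \<otimes> q \<otimes> (a' \<otimes> t') = q \<otimes> t' \<otimes> (p \<otimes> a')"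
    and "p \<otimes> q \<otimes> (b' \<otimes> s') = p \<otimes> s' \<otimes> (q \<otimes> b')"
    using a' b' C by (simp_all add: hmul_ac)
  moreover have "q \<otimes> t' \<otimes> (p \<otimes> a') \<in> N" "p \<otimes> s' \<otimes> (q \<otimes> b') \<in> N"
    using hyperideal_hmul[OF N] p(2) q(2) C by simp_all
  ultimately have "p \<otimes> q \<otimes> c \<in> N" using hyperideal_hadd[OF N] by auto
  moreover have "c \<in> carrier R" using hadd_mem_closed[OF c(1)] a' b' C by simp
  ultimately show "Z \<in> loc_set R S N"
    using frac_mem_loc_set_iff[OF N _ hmul_mult_closed[OF a'(2) b'(2)]] c(2)
      hmul_mult_closed[OF p(1) q(1)] by blast
qed

lemma hyperideal_loc_set:
  assumes N: "hyperideal R N"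
  shows "hyperideal (localization R S) (loc_set R S N)"
  unfolding hyperideal_def
proof (intro conjI ballI)
  show "loc_set R S N \<subseteq> carrier (localization R S)"
    unfolding carrier_loc loc_set_def using hyperideal_subset[OF N] by blast
  show "loc_set R S N \<noteq> {}"
    unfolding loc_set_def using hyperideal_hzero[OF N] hone_mult_closed by blast
next
  fix X Y assume X: "X \<in> loc_set R S N" and "Y \<in> loc_set R S N"
  then obtain b t where b: "b \<in> N" "t \<in> S" "Y = frac R S b t" unfolding loc_set_def by blast
  then have "hneg (localization R S) Y = frac R S (neg b) t"
    using hneg_loc hyperideal_subset[OF N] by blast
  then have "hneg (localization R S) Y \<in> loc_set R S N"
    using hyperideal_hneg[OF N b(1)] b(2) unfolding loc_set_def by blast
  then show "hadd (localization R S) X (hneg (localization R S) Y) \<subseteq> loc_set R S N"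
    using hadd_loc_subset_loc_set[OF N X] by blast
next
  fix X Y assume "X \<in> carrier (localization R S)" "Y \<in> loc_set R S N"
  then obtain r s a t where r: "r \<in> carrier R" "s \<in> S" "X = frac R S r s"
    and a: "a \<in> N" "t \<in> S" "Y = frac R S a t"
    unfolding carrier_loc loc_set_def by blast
  have "a \<in> carrier R" using a(1) hyperideal_subset[OF N] by blast
  then have "hmul (localization R S) X Y = frac R S (r \<otimes> a) (s \<otimes> t)"
    using hmul_loc r a by simp
  moreover have "r \<otimes> a \<in> N" "s \<otimes> t \<in> S"
    using hyperideal_hmul[OF N r(1) a(1)] hmul_mult_closed[OF r(2) a(2)] .
  ultimately show "hmul (localization R S) X Y \<in> loc_set R S N" unfolding loc_set_def by blast
qed

lemma frac_phi_primary_loc_set: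
  assumes T: "phi_primary R \<phi> T"
    and phi_T: "loc_set R S (\<phi> T) \<subseteq> phi_loc R S \<phi> (loc_set R S T)"
    and a: "a \<in> carrier R" "s \<in> S" and b: "b \<in> carrier R" "t \<in> S"
    and ab: "frac R S (a \<otimes> b) (s \<otimes> t) \<in> loc_set R S T"
      "frac R S (a \<otimes> b) (s \<otimes> t) \<notin> phi_loc R S \<phi> (loc_set R S T)"
  shows "frac R S a s \<in> loc_set R S T \<or> (\<exists>k\<ge>1. frac R S (hpow R b k) (hpow R t k) \<in> loc_set R S T)"
proof -
  have hT: "hyperideal R T" using T unfolding phi_primary_def by blast
  have abC: "a \<otimes> b \<in> carrier R" and st: "s \<otimes> t \<in> S"
    using a b hmul_mult_closed by simp_all
  obtain p where p: "p \<in> S" "p \<otimes> (a \<otimes> b) \<in> T"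
    using ab(1) frac_mem_loc_set_iff[OF hT abC st] by auto
  have pC: "p \<in> carrier R" using p(1) mult_closed_subset by blast
  have assoc: "p \<otimes> a \<otimes> b = p \<otimes> (a \<otimes> b)" using pC a b by (simp add: hmul_assoc)
  have "p \<otimes> a \<otimes> b \<notin> \<phi> T"
  proof
    assume "p \<otimes> a \<otimes> b \<in> \<phi> T"
    then have "frac R S (p \<otimes> (a \<otimes> b)) (p \<otimes> (s \<otimes> t)) \<in> loc_set R S (\<phi> T)"
      using assoc hmul_mult_closed[OF p(1) st] unfolding loc_set_def by auto
    then show False using ab(2) frac_scale[OF abC st p(1)] phi_T by auto
  qed
  moreover have "p \<otimes> a \<otimes> b \<in> T" using assoc p(2) by simp
  moreover have "p \<otimes> a \<in> carrier R" using pC a(1) by simp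
  ultimately have "p \<otimes> a \<in> T \<or> (\<exists>k\<ge>1. hpow R b k \<in> T)"
    using T b(1) unfolding phi_primary_def by blast
  moreover have "p \<otimes> a \<in> T \<Longrightarrow> frac R S a s \<in> loc_set R S T"
    using frac_mem_loc_set_iff[OF hT a] p(1) by blast
  moreover have "hpow R b k \<in> T \<Longrightarrow> frac R S (hpow R b k) (hpow R t k) \<in> loc_set R S T" for k
    using hpow_mult_closed[OF b(2)] unfolding loc_set_def by blast
  ultimately show ?thesis by blast
qed

lemma phi_primary_loc:
  assumes T: "phi_primary R \<phi> T"
    and phi_T: "loc_set R S (\<phi> T) \<subseteq> phi_loc R S \<phi> (loc_set R S T)"
  shows "phi_primary (localization R S) (phi_loc R S \<phi>) (loc_set R S T)"
proof -
  have "X \<in> loc_set R S T \<or> (\<exists>k\<ge>1. hpow (localization R S) Y k \<in> loc_set R S T)"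
    if X: "X \<in> carrier (localization R S)" and Y: "Y \<in> carrier (localization R S)"
      and XY: "hmul (localization R S) X Y \<in> loc_set R S T"
        "hmul (localization R S) X Y \<notin> phi_loc R S \<phi> (loc_set R S T)"
    for X Y
  proof -
    obtain a s b t where a: "a \<in> carrier R" "s \<in> S" "X = frac R S a s"
      and b: "b \<in> carrier R" "t \<in> S" "Y = frac R S b t"
      using X Y unfolding carrier_loc by blast
    then show ?thesis
      using frac_phi_primary_loc_set[OF T phi_T a(1,2) b(1,2)] XY hmul_loc hpow_loc by simp
  qed
  moreover have "hyperideal R T" using T unfolding phi_primary_def by blast
  ultimately show ?thesis unfolding phi_primary_def using hyperideal_loc_set by blast
qed

end

theorem mainTheorem14:
  fixes R :: "'a hyperring" and \<phi> :: "'a set \<Rightarrow> 'a set" and T :: "'a set"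
  assumes "krasner_hyperring R"
    and "reduction_fun R \<phi>"
    and "phi_primary R \<phi> T" and "T \<noteq> carrier R"
  shows "(\<forall>M. hyperideal R M \<and> M \<subseteq> T \<longrightarrow>
            phi_primary (quot_hyperring R M) (phi_quot R M \<phi>) (quot_set R M T)) \<and>
         (\<forall>S. mult_closed R S \<and> T \<inter> S = {} \<and> loc_set R S (\<phi> T) \<subseteq> phi_loc R S \<phi> (loc_set R S T) \<longrightarrow>
            phi_primary (localization R S) (phi_loc R S \<phi>) (loc_set R S T))"
proof (intro conjI allI impI)
  fix M assume M: "hyperideal R M \<and> M \<subseteq> T"
  interpret krasner_quotient R M
    using assms(1) M by unfold_locales blast+
  show "phi_primary (quot_hyperring R M) (phi_quot R M \<phi>) (quot_set R M T)"
    using phi_primary_quot assms(3) M by blast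
next
  fix S assume S: "mult_closed R S \<and> T \<inter> S = {} \<and>
    loc_set R S (\<phi> T) \<subseteq> phi_loc R S \<phi> (loc_set R S T)"
  interpret krasner_localization R S
    using assms(1) S by unfold_locales blast+
  show "phi_primary (localization R S) (phi_loc R S \<phi>) (loc_set R S T)"
    using phi_primary_loc assms(3) S by blast
qed

end
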